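(* Let $\mathcal{M}$ be a model category and $X,Y$ objects of $\mathcal{M}$. The inclusion of the full subcategory $(\mathrm{WCofib})^{-1}\mathcal{M}(\mathrm{WFib})^{-1}(X,Y)$ into $\mathcal{M}(X,Y)_{\mathrm{Hom}}$ is a homotopy equivalence of categories.
   Context: $\mathcal{M}(X,Y)_{\mathrm{Hom}}$ is the category whose objects are zig-zags $X \xleftarrow{\sim} U \to V \xleftarrow{\sim} Y$ in $\mathcal{M}$ (arrows marked $\sim$ are weak equivalences), a morphism $[X\leftarrow U\to V\leftarrow Y]\to[X\leftarrow U'\to V'\leftarrow Y]$ being a pair of weak equivalences $U\to U'$, $V\to V'$ making the evident diagram (identities on $X$, $Y$) commute. $(\mathrm{WCofib})^{-1}\mathcal{M}(\mathrm{WFib})^{-1}(X,Y)$ is the full subcategory on those zig-zags in which $U\to X$ is a trivial fibration and $Y\to V$ is a trivial cofibration. A functor $F\colon\mathcal{C}\to\mathcal{D}$ is a homotopy equivalence if there is a functor $G\colon\mathcal{D}\to\mathcal{C}$ together with zig-zags of natural transformations connecting $F\circ G$ with $\mathrm{id}_{\mathcal{D}}$ and $G\circ F$ with $\mathrm{id}_{\mathcal{C}}$. *)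

theory Defs
  imports Main
begin

record ('o, 'a) cat =
  Ob  :: "'o set"
  Ar  :: "'a set"
  Dom :: "'a \<Rightarrow> 'o"
  Cod :: "'a \<Rightarrow> 'o"
  Idt :: "'o \<Rightarrow> 'a"
  Cmp :: "'a \<Rightarrow> 'a \<Rightarrow> 'a"   (* Cmp C g f = g o f *)

definition hom :: "('o, 'a) cat \<Rightarrow> 'o \<Rightarrow> 'o \<Rightarrow> 'a set" where
  "hom C x y = {f \<in> Ar C. Dom C f = x \<and> Cod C f = y}"

definition category :: "('o, 'a) cat \<Rightarrow> bool" where
  "category C \<longleftrightarrow>
     (\<forall>f\<in>Ar C. Dom C f \<in> Ob C \<and> Cod C f \<in> Ob C) \<and>
     (\<forall>x\<in>Ob C. Idt C x \<in> hom C x x) \<and>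
     (\<forall>f\<in>Ar C. \<forall>g\<in>Ar C. Cod C f = Dom C g \<longrightarrow> Cmp C g f \<in> hom C (Dom C f) (Cod C g)) \<and>
     (\<forall>f\<in>Ar C. Cmp C (Idt C (Cod C f)) f = f \<and> Cmp C f (Idt C (Dom C f)) = f) \<and>
     (\<forall>f\<in>Ar C. \<forall>g\<in>Ar C. \<forall>h\<in>Ar C. Cod C f = Dom C g \<longrightarrow> Cod C g = Dom C h \<longrightarrow>
         Cmp C h (Cmp C g f) = Cmp C (Cmp C h g) f)"

definition op_cat :: "('o, 'a) cat \<Rightarrow> ('o, 'a) cat" where
  "op_cat C = C\<lparr>Dom := Cod C, Cod := Dom C, Cmp := (\<lambda>g f. Cmp C f g)\<rparr>"

definition terminal :: "('o, 'a) cat \<Rightarrow> 'o \<Rightarrow> bool" where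
  "terminal C t \<longleftrightarrow> t \<in> Ob C \<and> (\<forall>x\<in>Ob C. \<exists>!f. f \<in> hom C x t)"

definition has_pullbacks :: "('o, 'a) cat \<Rightarrow> bool" where
  "has_pullbacks C \<longleftrightarrow>
     (\<forall>f\<in>Ar C. \<forall>g\<in>Ar C. Cod C f = Cod C g \<longrightarrow>
        (\<exists>p q. p \<in> Ar C \<and> q \<in> Ar C \<and> Dom C p = Dom C q \<and> Cod C p = Dom C f \<and>
               Cod C q = Dom C g \<and> Cmp C f p = Cmp C g q \<and>
               (\<forall>a\<in>Ar C. \<forall>b\<in>Ar C. Dom C a = Dom C b \<and> Cod C a = Dom C f \<and>
                   Cod C b = Dom C g \<and> Cmp C f a = Cmp C g b \<longrightarrow>
                   (\<exists>!h. h \<in> hom C (Dom C a) (Dom C p) \<and> Cmp C p h = a \<and> Cmp C q h = b))))"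

text \<open>Finite completeness = terminal object + pullbacks; finite cocompleteness dually.\<close>
definition finitely_bicomplete :: "('o, 'a) cat \<Rightarrow> bool" where
  "finitely_bicomplete C \<longleftrightarrow>
     (\<exists>t. terminal C t) \<and> has_pullbacks C \<and>
     (\<exists>i. terminal (op_cat C) i) \<and> has_pullbacks (op_cat C)"

definition wide_subcategory :: "('o, 'a) cat \<Rightarrow> 'a set \<Rightarrow> bool" where
  "wide_subcategory C S \<longleftrightarrow> S \<subseteq> Ar C \<and> (\<forall>x\<in>Ob C. Idt C x \<in> S) \<and>
     (\<forall>f\<in>S. \<forall>g\<in>S. Cod C f = Dom C g \<longrightarrow> Cmp C g f \<in> S)"

definition two_out_of_three :: "('o, 'a) cat \<Rightarrow> 'a set \<Rightarrow> bool" where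
  "two_out_of_three C W \<longleftrightarrow>
     (\<forall>f\<in>Ar C. \<forall>g\<in>Ar C. Cod C f = Dom C g \<longrightarrow>
        ((f \<in> W \<and> g \<in> W \<longrightarrow> Cmp C g f \<in> W) \<and>
         (f \<in> W \<and> Cmp C g f \<in> W \<longrightarrow> g \<in> W) \<and>
         (g \<in> W \<and> Cmp C g f \<in> W \<longrightarrow> f \<in> W)))"

definition retract_of :: "('o, 'a) cat \<Rightarrow> 'a \<Rightarrow> 'a \<Rightarrow> bool" where
  "retract_of C f g \<longleftrightarrow> f \<in> Ar C \<and> g \<in> Ar C \<and>
     (\<exists>i r i' r'. i \<in> hom C (Dom C f) (Dom C g) \<and> r \<in> hom C (Dom C g) (Dom C f) \<and>
        i' \<in> hom C (Cod C f) (Cod C g) \<and> r' \<in> hom C (Cod C g) (Cod C f) \<and>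
        Cmp C r i = Idt C (Dom C f) \<and> Cmp C r' i' = Idt C (Cod C f) \<and>
        Cmp C g i = Cmp C i' f \<and> Cmp C f r = Cmp C r' g)"

definition closed_under_retracts :: "('o, 'a) cat \<Rightarrow> 'a set \<Rightarrow> bool" where
  "closed_under_retracts C S \<longleftrightarrow> (\<forall>f g. retract_of C f g \<and> g \<in> S \<longrightarrow> f \<in> S)"

definition llp :: "('o, 'a) cat \<Rightarrow> 'a \<Rightarrow> 'a \<Rightarrow> bool" where
  "llp C i p \<longleftrightarrow>
     (\<forall>u v. u \<in> hom C (Dom C i) (Dom C p) \<and> v \<in> hom C (Cod C i) (Cod C p) \<and>
            Cmp C p u = Cmp C v i \<longrightarrow>
        (\<exists>h\<in>hom C (Cod C i) (Dom C p). Cmp C h i = u \<and> Cmp C p h = v))"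

definition comm_square :: "('o, 'a) cat \<Rightarrow> 'a \<Rightarrow> 'a \<Rightarrow> 'a \<Rightarrow> 'a \<Rightarrow> bool" where
  "comm_square C f g u v \<longleftrightarrow> f \<in> Ar C \<and> g \<in> Ar C \<and>
     u \<in> hom C (Dom C f) (Dom C g) \<and> v \<in> hom C (Cod C f) (Cod C g) \<and>
     Cmp C g u = Cmp C v f"

definition functorial_factorization ::
  "('o, 'a) cat \<Rightarrow> ('a \<Rightarrow> 'a) \<Rightarrow> ('a \<Rightarrow> 'a) \<Rightarrow> ('a \<Rightarrow> 'a \<Rightarrow> 'a \<Rightarrow> 'a \<Rightarrow> 'a) \<Rightarrow> bool" where
  "functorial_factorization C L R M \<longleftrightarrow>
     (\<forall>f\<in>Ar C. L f \<in> Ar C \<and> R f \<in> Ar C \<and> Dom C (L f) = Dom C f \<and> Cod C (R f) = Cod C f \<and>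
                Cod C (L f) = Dom C (R f) \<and> Cmp C (R f) (L f) = f) \<and>
     (\<forall>f g u v. comm_square C f g u v \<longrightarrow>
        M f g u v \<in> hom C (Cod C (L f)) (Cod C (L g)) \<and>
        Cmp C (M f g u v) (L f) = Cmp C (L g) u \<and>
        Cmp C (R g) (M f g u v) = Cmp C v (R f)) \<and>
     (\<forall>f\<in>Ar C. M f f (Idt C (Dom C f)) (Idt C (Cod C f)) = Idt C (Cod C (L f))) \<and>
     (\<forall>f g h u v u' v'. comm_square C f g u v \<and> comm_square C g h u' v' \<longrightarrow>
        M f h (Cmp C u' u) (Cmp C v' v) = Cmp C (M g h u' v') (M f g u v))"

definition model_category :: "('o, 'a) cat \<Rightarrow> 'a set \<Rightarrow> 'a set \<Rightarrow> 'a set \<Rightarrow> bool" where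
  "model_category C W Cof Fib \<longleftrightarrow>
     category C \<and> finitely_bicomplete C \<and>
     wide_subcategory C W \<and> wide_subcategory C Cof \<and> wide_subcategory C Fib \<and>
     two_out_of_three C W \<and>
     closed_under_retracts C W \<and> closed_under_retracts C Cof \<and> closed_under_retracts C Fib \<and>
     (\<forall>i\<in>Cof \<inter> W. \<forall>p\<in>Fib. llp C i p) \<and>
     (\<forall>i\<in>Cof. \<forall>p\<in>Fib \<inter> W. llp C i p) \<and>
     (\<exists>L R M. functorial_factorization C L R M \<and> (\<forall>f\<in>Ar C. L f \<in> Cof \<inter> W \<and> R f \<in> Fib)) \<and>
     (\<exists>L R M. functorial_factorization C L R M \<and> (\<forall>f\<in>Ar C. L f \<in> Cof \<and> R f \<in> Fib \<inter> W))"

text \<open>An object (a, b, c) encodes the zig-zag  X <-a- U -b-> V <-c- Y.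
  A morphism (s, t, u, v) goes from s to t with u : U -> U', v : V -> V'.\<close>

definition zz_obj :: "('o, 'a) cat \<Rightarrow> 'a set \<Rightarrow> 'o \<Rightarrow> 'o \<Rightarrow> 'a \<times> 'a \<times> 'a \<Rightarrow> bool" where
  "zz_obj C W X Y z \<longleftrightarrow> (case z of (a, b, c) \<Rightarrow>
     a \<in> W \<and> c \<in> W \<and> a \<in> Ar C \<and> b \<in> Ar C \<and> c \<in> Ar C \<and>
     Cod C a = X \<and> Dom C b = Dom C a \<and> Dom C c = Y \<and> Cod C b = Cod C c)"

definition zz_arr :: "('o, 'a) cat \<Rightarrow> 'a set \<Rightarrow> 'o \<Rightarrow> 'o \<Rightarrow>
    ('a \<times> 'a \<times> 'a) \<times> ('a \<times> 'a \<times> 'a) \<times> 'a \<times> 'a \<Rightarrow> bool" where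
  "zz_arr C W X Y m \<longleftrightarrow> (case m of ((a, b, c), (a', b', c'), u, v) \<Rightarrow>
     zz_obj C W X Y (a, b, c) \<and> zz_obj C W X Y (a', b', c') \<and>
     u \<in> W \<and> v \<in> W \<and>
     u \<in> hom C (Dom C a) (Dom C a') \<and> v \<in> hom C (Cod C b) (Cod C b') \<and>
     Cmp C a' u = a \<and> Cmp C b' u = Cmp C v b \<and> Cmp C v c = c')"

definition HomCat :: "('o, 'a) cat \<Rightarrow> 'a set \<Rightarrow> 'o \<Rightarrow> 'o \<Rightarrow>
    ('a \<times> 'a \<times> 'a, ('a \<times> 'a \<times> 'a) \<times> ('a \<times> 'a \<times> 'a) \<times> 'a \<times> 'a) cat" where
  "HomCat C W X Y =
     \<lparr> Ob = {z. zz_obj C W X Y z},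
       Ar = {m. zz_arr C W X Y m},
       Dom = (\<lambda>m. fst m),
       Cod = (\<lambda>m. fst (snd m)),
       Idt = (\<lambda>z. (z, z, Idt C (Dom C (fst z)), Idt C (Cod C (fst (snd z))))),
       Cmp = (\<lambda>g f. (fst f, fst (snd g),
                      Cmp C (fst (snd (snd g))) (fst (snd (snd f))),
                      Cmp C (snd (snd (snd g))) (snd (snd (snd f))))) \<rparr>"

definition full_subcat :: "('o, 'a) cat \<Rightarrow> ('o \<Rightarrow> bool) \<Rightarrow> ('o, 'a) cat" where
  "full_subcat C P = C\<lparr>Ob := {x \<in> Ob C. P x}, Ar := {f \<in> Ar C. P (Dom C f) \<and> P (Cod C f)}\<rparr>"

text \<open>(WCofib)^{-1} M (WFib)^{-1}(X,Y): U -> X a trivial fibration, Y -> V a trivial cofibration.\<close>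
definition WCWFCat :: "('o, 'a) cat \<Rightarrow> 'a set \<Rightarrow> 'a set \<Rightarrow> 'a set \<Rightarrow> 'o \<Rightarrow> 'o \<Rightarrow>
    ('a \<times> 'a \<times> 'a, ('a \<times> 'a \<times> 'a) \<times> ('a \<times> 'a \<times> 'a) \<times> 'a \<times> 'a) cat" where
  "WCWFCat C W Cof Fib X Y =
     full_subcat (HomCat C W X Y) (\<lambda>(a, b, c). a \<in> Fib \<inter> W \<and> c \<in> Cof \<inter> W)"

type_synonym ('o, 'a, 'p, 'b) fnctr = "('o \<Rightarrow> 'p) \<times> ('a \<Rightarrow> 'b)"

definition is_functor :: "('o, 'a) cat \<Rightarrow> ('p, 'b) cat \<Rightarrow> ('o, 'a, 'p, 'b) fnctr \<Rightarrow> bool" where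
  "is_functor C D F \<longleftrightarrow>
     (\<forall>x\<in>Ob C. fst F x \<in> Ob D \<and> snd F (Idt C x) = Idt D (fst F x)) \<and>
     (\<forall>f\<in>Ar C. snd F f \<in> hom D (fst F (Dom C f)) (fst F (Cod C f))) \<and>
     (\<forall>f\<in>Ar C. \<forall>g\<in>Ar C. Cod C f = Dom C g \<longrightarrow>
        snd F (Cmp C g f) = Cmp D (snd F g) (snd F f))"

definition id_functor :: "('o, 'a, 'o, 'a) fnctr" where
  "id_functor = (id, id)"

definition functor_comp :: "('p, 'b, 'q, 'c) fnctr \<Rightarrow> ('o, 'a, 'p, 'b) fnctr \<Rightarrow>
    ('o, 'a, 'q, 'c) fnctr" where
  "functor_comp G F = (fst G \<circ> fst F, snd G \<circ> snd F)"

definition nat_trans :: "('o, 'a) cat \<Rightarrow> ('p, 'b) cat \<Rightarrow> ('o, 'a, 'p, 'b) fnctr \<Rightarrow>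
    ('o, 'a, 'p, 'b) fnctr \<Rightarrow> ('o \<Rightarrow> 'b) \<Rightarrow> bool" where
  "nat_trans C D F G \<eta> \<longleftrightarrow> is_functor C D F \<and> is_functor C D G \<and>
     (\<forall>x\<in>Ob C. \<eta> x \<in> hom D (fst F x) (fst G x)) \<and>
     (\<forall>f\<in>Ar C. Cmp D (snd G f) (\<eta> (Dom C f)) = Cmp D (\<eta> (Cod C f)) (snd F f))"

inductive nt_zigzag :: "('o, 'a) cat \<Rightarrow> ('p, 'b) cat \<Rightarrow> ('o, 'a, 'p, 'b) fnctr \<Rightarrow>
    ('o, 'a, 'p, 'b) fnctr \<Rightarrow> bool"
  for C :: "('o, 'a) cat" and D :: "('p, 'b) cat" where
  zz_refl: "is_functor C D F \<Longrightarrow> nt_zigzag C D F F"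
| zz_fwd: "nt_zigzag C D F G \<Longrightarrow> nat_trans C D G H \<eta> \<Longrightarrow> nt_zigzag C D F H"
| zz_bwd: "nt_zigzag C D F G \<Longrightarrow> nat_trans C D H G \<eta> \<Longrightarrow> nt_zigzag C D F H"

definition homotopy_equivalence :: "('o, 'a) cat \<Rightarrow> ('p, 'b) cat \<Rightarrow> ('o, 'a, 'p, 'b) fnctr \<Rightarrow> bool" where
  "homotopy_equivalence C D F \<longleftrightarrow> is_functor C D F \<and>
     (\<exists>G. is_functor D C G \<and>
          nt_zigzag D D (functor_comp F G) id_functor \<and>
          nt_zigzag C C (functor_comp G F) id_functor)"

end

theory Submission
  imports Defs
begin

text \<open>
  Factor c functorially as c = R c \<circ> L c with L c a cofibration and R c a trivial fibration.
  Pulling b back along R c turns the zig-zag X \<leftarrow>a U \<rightarrow>b V \<leftarrow>c Y into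
  X \<leftarrow> P \<rightarrow> Cod (L c) \<leftarrow>L c Y, whose right leg is a cofibration. Trivial fibrations are
  stable under pullback, so the projection P \<rightarrow> U and R c form a natural weak equivalence
  F \<Rightarrow> id, and F keeps a fibrant left leg fibrant. The same construction in the opposite model
  category, read through the isomorphism that reverses zig-zags, gives id \<Rightarrow> G with G making
  the left leg a fibration and keeping a cofibrant right leg cofibrant. So G \<circ> F lands in the
  subcategory, and G \<circ> F \<Leftarrow> F \<Rightarrow> id, which restricts to the subcategory because F does,
  makes G \<circ> F a homotopy inverse of the inclusion.
\<close>

section \<open>Opposite categories\<close>

lemma op_cat_simps [simp]:
  "Ob (op_cat C) = Ob C" "Ar (op_cat C) = Ar C" "Dom (op_cat C) = Cod C" "Cod (op_cat C) = Dom C"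
  "Idt (op_cat C) = Idt C" "Cmp (op_cat C) g f = Cmp C f g"
  by (simp_all add: op_cat_def)

lemma hom_op_cat [simp]: "hom (op_cat C) x y = hom C y x"
  by (auto simp: hom_def)

lemma op_op_cat [simp]: "op_cat (op_cat C) = C"
  by (simp add: op_cat_def)

lemma category_op_cat: "category C \<Longrightarrow> category (op_cat C)"
  unfolding category_def by (auto simp: hom_def)

lemma finitely_bicomplete_op_cat: "finitely_bicomplete C \<Longrightarrow> finitely_bicomplete (op_cat C)"
  unfolding finitely_bicomplete_def by auto

lemma wide_subcategory_op_cat [simp]: "wide_subcategory (op_cat C) S \<longleftrightarrow> wide_subcategory C S"
  unfolding wide_subcategory_def by auto

lemma two_out_of_three_op_cat [simp]: "two_out_of_three (op_cat C) S \<longleftrightarrow> two_out_of_three C S"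
  unfolding two_out_of_three_def by auto

lemma retract_of_op_cat [simp]: "retract_of (op_cat C) f g \<longleftrightarrow> retract_of C f g"
  unfolding retract_of_def by auto metis+

lemma closed_under_retracts_op_cat [simp]:
  "closed_under_retracts (op_cat C) S \<longleftrightarrow> closed_under_retracts C S"
  unfolding closed_under_retracts_def by simp

lemma llp_op_cat [simp]: "llp (op_cat C) i p \<longleftrightarrow> llp C p i"
  unfolding llp_def by auto metis+

lemma comm_square_op_cat [simp]: "comm_square (op_cat C) f g u v \<longleftrightarrow> comm_square C g f v u"
  unfolding comm_square_def by auto

lemma functorial_factorization_op_cat:
  assumes "functorial_factorization C L R M"
  shows "functorial_factorization (op_cat C) R L (\<lambda>f g u v. M g f v u)"
  using assms unfolding functorial_factorization_def
  by (simp add: hom_def) (metis (no_types, lifting) comm_square_def)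

lemma model_category_op_cat:
  assumes "model_category C W Cof Fib"
  shows "model_category (op_cat C) W Fib Cof"
proof -
  have factorization_op:
    "\<exists>L R M. functorial_factorization (op_cat C) L R M \<and> (\<forall>f\<in>Ar C. L f \<in> P \<and> R f \<in> Q)"
    if "\<exists>L R M. functorial_factorization C L R M \<and> (\<forall>f\<in>Ar C. L f \<in> Q \<and> R f \<in> P)" for P Q
    using that functorial_factorization_op_cat by fastforce
  from assms factorization_op[of Cof "Fib \<inter> W"] factorization_op[of "Cof \<inter> W" Fib]
  show ?thesis
    unfolding model_category_def by (simp add: category_op_cat finitely_bicomplete_op_cat)
qed

lemma is_functor_op_cat [simp]: "is_functor (op_cat C) (op_cat D) F \<longleftrightarrow> is_functor C D F"
  unfolding is_functor_def by auto

lemma nat_trans_op_cat [simp]: "nat_trans (op_cat C) (op_cat D) F G \<eta> \<longleftrightarrow> nat_trans C D G F \<eta>"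
  unfolding nat_trans_def by auto

section \<open>Functors and full subcategories\<close>

lemma is_functor_id: "is_functor C C id_functor"
  unfolding is_functor_def id_functor_def hom_def by auto

lemma is_functor_comp:
  "is_functor C D F \<Longrightarrow> is_functor D E G \<Longrightarrow> is_functor C E (functor_comp G F)"
  unfolding is_functor_def functor_comp_def hom_def by auto

lemma functor_comp_id [simp]:
  "functor_comp id_functor F = F" "functor_comp F id_functor = F"
  by (simp_all add: functor_comp_def id_functor_def)

lemma nat_trans_whisker_right:
  assumes \<eta>: "nat_trans D E F G \<eta>" and K: "is_functor C D K"
  shows "nat_trans C E (functor_comp F K) (functor_comp G K) (\<eta> \<circ> fst K)"
  unfolding nat_trans_def
proof (intro conjI ballI)
  show "is_functor C E (functor_comp F K)" "is_functor C E (functor_comp G K)"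
    using \<eta> K is_functor_comp unfolding nat_trans_def by blast+
  show "(\<eta> \<circ> fst K) x \<in> hom E (fst (functor_comp F K) x) (fst (functor_comp G K) x)"
    if "x \<in> Ob C" for x
    using \<eta> K that by (simp add: nat_trans_def is_functor_def functor_comp_def)
  show "Cmp E (snd (functor_comp G K) f) ((\<eta> \<circ> fst K) (Dom C f)) =
        Cmp E ((\<eta> \<circ> fst K) (Cod C f)) (snd (functor_comp F K) f)" if "f \<in> Ar C" for f
  proof -
    have "snd K f \<in> hom D (fst K (Dom C f)) (fst K (Cod C f))"
      using K that by (simp add: is_functor_def)
    then show ?thesis
      using \<eta> by (auto simp: nat_trans_def functor_comp_def hom_def)
  qed
qed

lemma nat_trans_whisker_left:
  assumes \<eta>: "nat_trans C D F G \<eta>" and K: "is_functor D E K"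
    and ob: "\<forall>f\<in>Ar C. Dom C f \<in> Ob C \<and> Cod C f \<in> Ob C"
  shows "nat_trans C E (functor_comp K F) (functor_comp K G) (snd K \<circ> \<eta>)"
  unfolding nat_trans_def
proof (intro conjI ballI)
  have F: "is_functor C D F" and G: "is_functor C D G"
    using \<eta> by (simp_all add: nat_trans_def)
  show "is_functor C E (functor_comp K F)" "is_functor C E (functor_comp K G)"
    using is_functor_comp[OF F K] is_functor_comp[OF G K] .
  show "(snd K \<circ> \<eta>) x \<in> hom E (fst (functor_comp K F) x) (fst (functor_comp K G) x)"
    if "x \<in> Ob C" for x
    using \<eta> K that by (simp add: nat_trans_def is_functor_def functor_comp_def hom_def)
  show "Cmp E (snd (functor_comp K G) f) ((snd K \<circ> \<eta>) (Dom C f)) =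
        Cmp E ((snd K \<circ> \<eta>) (Cod C f)) (snd (functor_comp K F) f)" if f: "f \<in> Ar C" for f
  proof -
    have "\<eta> (Dom C f) \<in> hom D (fst F (Dom C f)) (fst G (Dom C f))"
      "\<eta> (Cod C f) \<in> hom D (fst F (Cod C f)) (fst G (Cod C f))"
      using \<eta> ob f by (simp_all add: nat_trans_def)
    moreover have "snd F f \<in> hom D (fst F (Dom C f)) (fst F (Cod C f))"
      "snd G f \<in> hom D (fst G (Dom C f)) (fst G (Cod C f))"
      using F G f by (simp_all add: is_functor_def)
    moreover have "Cmp D (snd G f) (\<eta> (Dom C f)) = Cmp D (\<eta> (Cod C f)) (snd F f)"
      using \<eta> f by (simp add: nat_trans_def)
    moreover have "snd K (Cmp D h g) = Cmp E (snd K h) (snd K g)"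
      if "g \<in> Ar D" "h \<in> Ar D" "Cod D g = Dom D h" for g h
      using K that by (simp add: is_functor_def)
    ultimately show ?thesis
      by (simp add: functor_comp_def hom_def) metis
  qed
qed

lemma full_subcat_simps [simp]:
  "Ob (full_subcat C P) = {x \<in> Ob C. P x}"
  "Ar (full_subcat C P) = {f \<in> Ar C. P (Dom C f) \<and> P (Cod C f)}"
  "Dom (full_subcat C P) = Dom C" "Cod (full_subcat C P) = Cod C"
  "Idt (full_subcat C P) = Idt C" "Cmp (full_subcat C P) = Cmp C"
  by (simp_all add: full_subcat_def)

lemma hom_full_subcat: "hom (full_subcat C P) x y = {f \<in> hom C x y. P x \<and> P y}"
  by (auto simp: hom_def)

lemma is_functor_full_subcat_inclusion: "is_functor (full_subcat C P) C id_functor"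
  unfolding is_functor_def id_functor_def hom_def by auto

lemma is_functor_into_full_subcat:
  assumes "is_functor C D F" and "\<forall>f\<in>Ar C. Dom C f \<in> Ob C \<and> Cod C f \<in> Ob C"
    and "\<forall>x\<in>Ob C. Q (fst F x)"
  shows "is_functor C (full_subcat D Q) F"
  using assms unfolding is_functor_def hom_full_subcat by (auto simp: hom_def)

lemma is_functor_full_subcat_restrict:
  assumes "is_functor C D F" and "\<forall>f\<in>Ar C. Dom C f \<in> Ob C \<and> Cod C f \<in> Ob C"
    and "\<forall>x\<in>Ob C. P x \<longrightarrow> Q (fst F x)"
  shows "is_functor (full_subcat C P) (full_subcat D Q) F"
  using assms unfolding is_functor_def hom_full_subcat by (auto simp: hom_def)

lemma nat_trans_full_subcat_restrict:
  assumes "nat_trans C D F G \<eta>" and "\<forall>f\<in>Ar C. Dom C f \<in> Ob C \<and> Cod C f \<in> Ob C"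
    and "\<forall>x\<in>Ob C. P x \<longrightarrow> Q (fst F x)" and "\<forall>x\<in>Ob C. P x \<longrightarrow> Q (fst G x)"
  shows "nat_trans (full_subcat C P) (full_subcat D Q) F G \<eta>"
  using assms is_functor_full_subcat_restrict[of C D _ P Q]
  unfolding nat_trans_def hom_full_subcat by auto

lemma homotopy_equivalence_full_subcat_inclusion:
  assumes ends: "\<forall>f\<in>Ar C. Dom C f \<in> Ob C \<and> Cod C f \<in> Ob C"
    and \<epsilon>: "nat_trans C C F id_functor \<epsilon>" and \<eta>: "nat_trans C C F G \<eta>"
    and F_P: "\<forall>x\<in>Ob C. P x \<longrightarrow> P (fst F x)" and G_P: "\<forall>x\<in>Ob C. P (fst G x)"
  shows "homotopy_equivalence (full_subcat C P) C id_functor"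
  unfolding homotopy_equivalence_def
proof (intro conjI exI[of _ G])
  have F: "is_functor C C F" and G: "is_functor C C G"
    using \<eta> by (simp_all add: nat_trans_def)
  show "is_functor (full_subcat C P) C id_functor"
    by (rule is_functor_full_subcat_inclusion)
  show "is_functor C (full_subcat C P) G"
    using is_functor_into_full_subcat[OF G ends] G_P by blast
  show "nt_zigzag C C (functor_comp id_functor G) id_functor"
    using nt_zigzag.zz_fwd[OF nt_zigzag.zz_bwd[OF nt_zigzag.zz_refl[OF G] \<eta>] \<epsilon>] by simp
  let ?S = "full_subcat C P"
  have "nat_trans ?S ?S F G \<eta>" "nat_trans ?S ?S F id_functor \<epsilon>"
    using nat_trans_full_subcat_restrict[OF \<eta> ends] nat_trans_full_subcat_restrict[OF \<epsilon> ends]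
      F_P G_P
    by (simp_all add: id_functor_def)
  moreover have "is_functor ?S ?S G"
    using is_functor_full_subcat_restrict[OF G ends] G_P by blast
  ultimately show "nt_zigzag ?S ?S (functor_comp G id_functor) id_functor"
    using nt_zigzag.zz_fwd[OF nt_zigzag.zz_bwd[OF nt_zigzag.zz_refl]] by fastforce
qed

section \<open>Zig-zags\<close>

type_synonym 'a zigzag = "'a \<times> 'a \<times> 'a"
type_synonym 'a zigzag_map = "'a zigzag \<times> 'a zigzag \<times> 'a \<times> 'a"

lemma HomCat_simps [simp]:
  "Ob (HomCat C W X Y) = {z. zz_obj C W X Y z}" "Ar (HomCat C W X Y) = {m. zz_arr C W X Y m}"
  "Dom (HomCat C W X Y) = fst" "Cod (HomCat C W X Y) = fst \<circ> snd"
  "Idt (HomCat C W X Y) z = (z, z, Idt C (Dom C (fst z)), Idt C (Cod C (fst (snd z))))"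
  "Cmp (HomCat C W X Y) m' m = (fst m, fst (snd m'),
     Cmp C (fst (snd (snd m'))) (fst (snd (snd m))),
     Cmp C (snd (snd (snd m'))) (snd (snd (snd m))))"
  by (auto simp: HomCat_def)

lemma zz_obj_iff:
  "zz_obj C W X Y (a, b, c) \<longleftrightarrow> a \<in> W \<and> c \<in> W \<and> a \<in> Ar C \<and> b \<in> Ar C \<and> c \<in> Ar C \<and>
     Cod C a = X \<and> Dom C b = Dom C a \<and> Dom C c = Y \<and> Cod C b = Cod C c"
  by (simp add: zz_obj_def)

lemma zz_arr_iff:
  "zz_arr C W X Y ((a, b, c), (a', b', c'), u, v) \<longleftrightarrow>
     zz_obj C W X Y (a, b, c) \<and> zz_obj C W X Y (a', b', c') \<and>
     u \<in> W \<and> v \<in> W \<and> u \<in> Ar C \<and> Dom C u = Dom C a \<and> Cod C u = Dom C a' \<and>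
     v \<in> Ar C \<and> Dom C v = Cod C b \<and> Cod C v = Cod C b' \<and>
     Cmp C a' u = a \<and> Cmp C b' u = Cmp C v b \<and> Cmp C v c = c'"
  by (auto simp: zz_arr_def hom_def)

lemma zz_objD:
  assumes "zz_obj C W X Y (a, b, c)"
  shows "a \<in> Ar C" "b \<in> Ar C" "c \<in> Ar C" "a \<in> W" "c \<in> W"
    "Cod C a = X" "Dom C b = Dom C a" "Dom C c = Y" "Cod C b = Cod C c"
  using assms by (simp_all add: zz_obj_iff)

lemma zz_arrD:
  assumes "zz_arr C W X Y ((a, b, c), (a', b', c'), u, v)"
  shows "zz_obj C W X Y (a, b, c)" "zz_obj C W X Y (a', b', c')"
    "u \<in> Ar C" "Dom C u = Dom C a" "Cod C u = Dom C a'" "u \<in> W"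
    "v \<in> Ar C" "Dom C v = Cod C b" "Cod C v = Cod C b'" "v \<in> W"
    "Cmp C a' u = a" "Cmp C b' u = Cmp C v b" "Cmp C v c = c'"
  using assms by (simp_all add: zz_arr_iff)

text \<open>Read backwards, X \<leftarrow>a U \<rightarrow>b V \<leftarrow>c Y is a zig-zag from Y to X in the opposite
  category, and a map (u, v) of zig-zags becomes a map (v, u) in the other direction.\<close>

definition reverse_zz_ob :: "'a zigzag \<Rightarrow> 'a zigzag" where
  "reverse_zz_ob = (\<lambda>(a, b, c). (c, b, a))"

definition reverse_zz :: "('a zigzag, 'a zigzag_map, 'a zigzag, 'a zigzag_map) fnctr" where
  "reverse_zz = (reverse_zz_ob, \<lambda>(z, z', u, v). (reverse_zz_ob z', reverse_zz_ob z, v, u))"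

lemma reverse_zz_involutive [simp]: "functor_comp reverse_zz reverse_zz = id_functor"
  by (auto simp: functor_comp_def reverse_zz_def reverse_zz_ob_def id_functor_def fun_eq_iff)

lemma zz_obj_op_cat: "zz_obj (op_cat C) W Y X (c, b, a) \<longleftrightarrow> zz_obj C W X Y (a, b, c)"
  by (auto simp: zz_obj_iff)

lemma is_functor_reverse_zz:
  "is_functor (op_cat (HomCat C W X Y)) (HomCat (op_cat C) W Y X) reverse_zz"
  unfolding is_functor_def hom_def
  by (auto simp: reverse_zz_def reverse_zz_ob_def zz_arr_iff zz_obj_iff split: prod.splits)

lemma HomCat_dom_cod:
  "\<forall>m\<in>Ar (HomCat C W X Y). Dom (HomCat C W X Y) m \<in> Ob (HomCat C W X Y) \<and>
     Cod (HomCat C W X Y) m \<in> Ob (HomCat C W X Y)"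
  by (auto simp: zz_arr_def split: prod.splits)

section \<open>Pullbacks in a model category\<close>

definition is_pullback :: "('o, 'a) cat \<Rightarrow> 'a \<Rightarrow> 'a \<Rightarrow> 'a \<Rightarrow> 'a \<Rightarrow> bool" where
  "is_pullback C f g p q \<longleftrightarrow> p \<in> Ar C \<and> q \<in> Ar C \<and> Dom C p = Dom C q \<and> Cod C p = Dom C f \<and>
     Cod C q = Dom C g \<and> Cmp C f p = Cmp C g q \<and>
     (\<forall>a\<in>Ar C. \<forall>b\<in>Ar C. Dom C a = Dom C b \<and> Cod C a = Dom C f \<and>
         Cod C b = Dom C g \<and> Cmp C f a = Cmp C g b \<longrightarrow>
         (\<exists>!h. h \<in> hom C (Dom C a) (Dom C p) \<and> Cmp C p h = a \<and> Cmp C q h = b))"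

lemma has_pullbacks_iff:
  "has_pullbacks C \<longleftrightarrow> (\<forall>f\<in>Ar C. \<forall>g\<in>Ar C. Cod C f = Cod C g \<longrightarrow> (\<exists>p q. is_pullback C f g p q))"
  unfolding has_pullbacks_def is_pullback_def ..

lemma retract_ofI:
  assumes "f \<in> Ar C" "g \<in> Ar C"
    and "i \<in> hom C (Dom C f) (Dom C g)" "r \<in> hom C (Dom C g) (Dom C f)"
    and "i' \<in> hom C (Cod C f) (Cod C g)" "r' \<in> hom C (Cod C g) (Cod C f)"
    and "Cmp C r i = Idt C (Dom C f)" "Cmp C r' i' = Idt C (Cod C f)"
    and "Cmp C g i = Cmp C i' f" "Cmp C f r = Cmp C r' g"
  shows "retract_of C f g"
  unfolding retract_of_def using assms by blast

locale model_cat =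
  fixes C :: "('o, 'a) cat" and W Cof Fib :: "'a set"
  assumes model: "model_category C W Cof Fib"
begin

abbreviation comp (infixr "\<cdot>" 75) where "g \<cdot> f \<equiv> Cmp C g f"

lemma category: "category C"
  using model by (simp add: model_category_def)

lemma dom_ob: "f \<in> Ar C \<Longrightarrow> Dom C f \<in> Ob C" and cod_ob: "f \<in> Ar C \<Longrightarrow> Cod C f \<in> Ob C"
  using category by (auto simp: category_def)

lemma comp_simps [simp]:
  assumes "f \<in> Ar C" "g \<in> Ar C" "Cod C f = Dom C g"
  shows "g \<cdot> f \<in> Ar C" "Dom C (g \<cdot> f) = Dom C f" "Cod C (g \<cdot> f) = Cod C g"
  using category assms by (auto simp: category_def hom_def)

lemma idt_simps [simp]:
  assumes "x \<in> Ob C"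
  shows "Idt C x \<in> Ar C" "Dom C (Idt C x) = x" "Cod C (Idt C x) = x"
  using category assms by (auto simp: category_def hom_def)

lemma comp_idt [simp]:
  assumes "f \<in> Ar C"
  shows "Cod C f = y \<Longrightarrow> Idt C y \<cdot> f = f" and "Dom C f = x \<Longrightarrow> f \<cdot> Idt C x = f"
  using category assms by (auto simp: category_def)

lemma comp_assoc:
  assumes "f \<in> Ar C" "g \<in> Ar C" "h \<in> Ar C" "Cod C f = Dom C g" "Cod C g = Dom C h"
  shows "h \<cdot> (g \<cdot> f) = (h \<cdot> g) \<cdot> f"
  using category assms unfolding category_def by metis

lemma W_arr: "f \<in> W \<Longrightarrow> f \<in> Ar C" and Cof_arr: "f \<in> Cof \<Longrightarrow> f \<in> Ar C"
  and Fib_arr: "f \<in> Fib \<Longrightarrow> f \<in> Ar C"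
  using model by (auto simp: model_category_def wide_subcategory_def)

lemma W_comp: "f \<in> W \<Longrightarrow> g \<in> W \<Longrightarrow> Cod C f = Dom C g \<Longrightarrow> g \<cdot> f \<in> W"
  and Fib_comp: "f \<in> Fib \<Longrightarrow> g \<in> Fib \<Longrightarrow> Cod C f = Dom C g \<Longrightarrow> g \<cdot> f \<in> Fib"
  using model by (auto simp: model_category_def wide_subcategory_def)

lemma W_cancel_post:
  "f \<in> Ar C \<Longrightarrow> g \<in> Ar C \<Longrightarrow> Cod C f = Dom C g \<Longrightarrow> g \<in> W \<Longrightarrow> g \<cdot> f \<in> W \<Longrightarrow> f \<in> W"
  using model by (auto simp: model_category_def two_out_of_three_def)

lemma trivial_fibration_if_rlp:
  assumes p: "p \<in> Ar C" and rlp: "\<forall>i\<in>Cof. llp C i p"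
  shows "p \<in> Fib \<inter> W"
proof -
  obtain L R M where fact: "functorial_factorization C L R M"
    and LR: "\<forall>f\<in>Ar C. L f \<in> Cof \<and> R f \<in> Fib \<inter> W"
    using model unfolding model_category_def by blast
  have L: "L p \<in> Ar C" "Dom C (L p) = Dom C p" "L p \<in> Cof"
    and R: "R p \<in> Ar C" "Cod C (R p) = Cod C p" "R p \<in> Fib \<inter> W"
    and LR_p: "Cod C (L p) = Dom C (R p)" "R p \<cdot> L p = p"
    using fact LR p unfolding functorial_factorization_def by auto
  have "llp C (L p) p"
    using rlp L by blast
  moreover have "Idt C (Dom C p) \<in> hom C (Dom C (L p)) (Dom C p)"
    "R p \<in> hom C (Cod C (L p)) (Cod C p)" "p \<cdot> Idt C (Dom C p) = R p \<cdot> L p"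
    using L R LR_p p dom_ob by (auto simp: hom_def)
  ultimately obtain s where s: "s \<in> hom C (Cod C (L p)) (Dom C p)" "s \<cdot> L p = Idt C (Dom C p)"
    "p \<cdot> s = R p"
    unfolding llp_def by blast
  \<comment> \<open>the lift s exhibits p as a retract of R p\<close>
  have "retract_of C p (R p)"
    using L R LR_p s p cod_ob[OF p]
    by (intro retract_ofI[where i = "L p" and r = s and i' = "Idt C (Cod C p)"
          and r' = "Idt C (Cod C p)"])
      (simp_all add: hom_def)
  moreover have "closed_under_retracts C W" "closed_under_retracts C Fib"
    using model by (simp_all add: model_category_def)
  ultimately show ?thesis
    using R unfolding closed_under_retracts_def by blast
qed

definition pb_proj :: "'a \<Rightarrow> 'a \<Rightarrow> 'a \<times> 'a" where
  "pb_proj f g = (SOME pq. is_pullback C f g (fst pq) (snd pq))"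

definition pb_fst :: "'a \<Rightarrow> 'a \<Rightarrow> 'a" where "pb_fst f g = fst (pb_proj f g)"
definition pb_snd :: "'a \<Rightarrow> 'a \<Rightarrow> 'a" where "pb_snd f g = snd (pb_proj f g)"

definition pb_lift :: "'a \<Rightarrow> 'a \<Rightarrow> 'a \<Rightarrow> 'a \<Rightarrow> 'a" where
  "pb_lift f g a b =
     (THE h. h \<in> hom C (Dom C a) (Dom C (pb_fst f g)) \<and> pb_fst f g \<cdot> h = a \<and> pb_snd f g \<cdot> h = b)"

context
  fixes f g
  assumes cospan: "f \<in> Ar C" "g \<in> Ar C" "Cod C f = Cod C g"
begin

lemma is_pullback_pb: "is_pullback C f g (pb_fst f g) (pb_snd f g)"
proof -
  have "\<exists>p q. is_pullback C f g p q"
    using model cospan by (auto simp: model_category_def finitely_bicomplete_def has_pullbacks_iff)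
  then have "is_pullback C f g (fst (pb_proj f g)) (snd (pb_proj f g))"
    unfolding pb_proj_def using someI_ex[of "\<lambda>pq. is_pullback C f g (fst pq) (snd pq)"] by simp
  then show ?thesis
    by (simp add: pb_fst_def pb_snd_def)
qed

lemma pb_simps [simp]:
  "pb_fst f g \<in> Ar C" "pb_snd f g \<in> Ar C" "Dom C (pb_snd f g) = Dom C (pb_fst f g)"
  "Cod C (pb_fst f g) = Dom C f" "Cod C (pb_snd f g) = Dom C g"
  using is_pullback_pb unfolding is_pullback_def by auto

lemma pb_commutes: "f \<cdot> pb_fst f g = g \<cdot> pb_snd f g"
  using is_pullback_pb unfolding is_pullback_def by blast

context
  fixes a b
  assumes cone: "a \<in> Ar C" "b \<in> Ar C" "Dom C a = Dom C b" "Cod C a = Dom C f" "Cod C b = Dom C g"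
    "f \<cdot> a = g \<cdot> b"
begin

lemma pb_lift_unique_ex:
  "\<exists>!h. h \<in> hom C (Dom C a) (Dom C (pb_fst f g)) \<and> pb_fst f g \<cdot> h = a \<and> pb_snd f g \<cdot> h = b"
  using is_pullback_pb cone unfolding is_pullback_def by blast

lemma pb_lift_factors:
  "pb_lift f g a b \<in> Ar C" "Dom C (pb_lift f g a b) = Dom C a"
  "Cod C (pb_lift f g a b) = Dom C (pb_fst f g)"
  "pb_fst f g \<cdot> pb_lift f g a b = a" "pb_snd f g \<cdot> pb_lift f g a b = b"
proof -
  have "pb_lift f g a b \<in> hom C (Dom C a) (Dom C (pb_fst f g)) \<and>
    pb_fst f g \<cdot> pb_lift f g a b = a \<and> pb_snd f g \<cdot> pb_lift f g a b = b"
    unfolding pb_lift_def by (rule theI'[OF pb_lift_unique_ex])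
  then show "pb_lift f g a b \<in> Ar C" "Dom C (pb_lift f g a b) = Dom C a"
    "Cod C (pb_lift f g a b) = Dom C (pb_fst f g)"
    "pb_fst f g \<cdot> pb_lift f g a b = a" "pb_snd f g \<cdot> pb_lift f g a b = b"
    unfolding hom_def by blast+
qed

lemma pb_lift_unique:
  assumes "h \<in> Ar C" "Dom C h = Dom C a" "Cod C h = Dom C (pb_fst f g)"
    and "pb_fst f g \<cdot> h = a" "pb_snd f g \<cdot> h = b"
  shows "h = pb_lift f g a b"
  unfolding pb_lift_def
  by (rule the1_equality[OF pb_lift_unique_ex, symmetric]) (use assms in \<open>simp add: hom_def\<close>)

end

lemma pb_lift_eta:
  assumes h: "h \<in> Ar C" "Cod C h = Dom C (pb_fst f g)"
  shows "pb_lift f g (pb_fst f g \<cdot> h) (pb_snd f g \<cdot> h) = h"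
proof -
  let ?p = "pb_fst f g" and ?q = "pb_snd f g"
  have "f \<cdot> (?p \<cdot> h) = (f \<cdot> ?p) \<cdot> h"
    using h cospan by (simp add: comp_assoc)
  also have "\<dots> = g \<cdot> (?q \<cdot> h)"
    using h cospan by (simp add: comp_assoc pb_commutes)
  finally have cone: "?p \<cdot> h \<in> Ar C" "?q \<cdot> h \<in> Ar C" "Dom C (?p \<cdot> h) = Dom C (?q \<cdot> h)"
    "Cod C (?p \<cdot> h) = Dom C f" "Cod C (?q \<cdot> h) = Dom C g" "f \<cdot> (?p \<cdot> h) = g \<cdot> (?q \<cdot> h)"
    using h cospan by simp_all
  show ?thesis
    using h by (intro pb_lift_unique[OF cone, symmetric]) simp_all
qed

lemma pb_arr_eqI:
  assumes "h \<in> Ar C" "Cod C h = Dom C (pb_fst f g)" "h' \<in> Ar C" "Cod C h' = Dom C (pb_fst f g)"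
    and "pb_fst f g \<cdot> h = pb_fst f g \<cdot> h'" "pb_snd f g \<cdot> h = pb_snd f g \<cdot> h'"
  shows "h = h'"
  using pb_lift_eta[of h] pb_lift_eta[of h'] assms by metis

lemma llp_pb_fst:
  assumes i: "i \<in> Ar C" and lift: "llp C i g"
  shows "llp C i (pb_fst f g)"
  unfolding llp_def
proof (intro allI impI)
  let ?p = "pb_fst f g" and ?q = "pb_snd f g"
  fix u v
  assume "u \<in> hom C (Dom C i) (Dom C ?p) \<and> v \<in> hom C (Cod C i) (Cod C ?p) \<and> ?p \<cdot> u = v \<cdot> i"
  then have u: "u \<in> Ar C" "Dom C u = Dom C i" "Cod C u = Dom C ?p"
    and v: "v \<in> Ar C" "Dom C v = Cod C i" "Cod C v = Dom C f" and sq: "?p \<cdot> u = v \<cdot> i"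
    by (simp_all add: hom_def)
  have "g \<cdot> (?q \<cdot> u) = (f \<cdot> ?p) \<cdot> u"
    using u cospan by (simp add: comp_assoc pb_commutes)
  also have "\<dots> = (f \<cdot> v) \<cdot> i"
    using u v i cospan sq by (simp add: comp_assoc[symmetric])
  finally have "g \<cdot> (?q \<cdot> u) = (f \<cdot> v) \<cdot> i" .
  moreover have "?q \<cdot> u \<in> hom C (Dom C i) (Dom C g)" "f \<cdot> v \<in> hom C (Cod C i) (Cod C g)"
    using u v cospan by (simp_all add: hom_def)
  ultimately obtain k where k: "k \<in> hom C (Cod C i) (Dom C g)" "k \<cdot> i = ?q \<cdot> u" "g \<cdot> k = f \<cdot> v"
    using lift unfolding llp_def by blast
  have cone: "v \<in> Ar C" "k \<in> Ar C" "Dom C v = Dom C k" "Cod C v = Dom C f" "Cod C k = Dom C g"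
    "f \<cdot> v = g \<cdot> k"
    using v k by (auto simp: hom_def)
  note h = pb_lift_factors[OF cone]
  have "pb_lift f g v k \<cdot> i = u"
  proof (rule pb_arr_eqI)
    show "?p \<cdot> (pb_lift f g v k \<cdot> i) = ?p \<cdot> u"
      using h i v sq by (simp add: comp_assoc)
    show "?q \<cdot> (pb_lift f g v k \<cdot> i) = ?q \<cdot> u"
      using h i v k by (simp add: comp_assoc)
  qed (use h i u v in simp_all)
  then show "\<exists>h\<in>hom C (Cod C i) (Dom C ?p). h \<cdot> i = u \<and> ?p \<cdot> h = v"
    using h v by (auto simp: hom_def)
qed

end

lemma pb_fst_trivial_fibration:
  assumes f: "f \<in> Ar C" and g: "g \<in> Fib \<inter> W" and cospan: "Cod C f = Cod C g"
  shows "pb_fst f g \<in> Fib \<inter> W"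
proof (rule trivial_fibration_if_rlp)
  have "g \<in> Ar C"
    using g Fib_arr by blast
  moreover have "llp C i g" if "i \<in> Cof" for i
    using model g that by (simp add: model_category_def)
  ultimately show "\<forall>i\<in>Cof. llp C i (pb_fst f g)"
    using f cospan Cof_arr llp_pb_fst by blast
  show "pb_fst f g \<in> Ar C"
    using f \<open>g \<in> Ar C\<close> cospan by simp
qed

end

section \<open>Replacing the legs of a zig-zag\<close>

locale cof_replacement = model_cat C W Cof Fib for C :: "('o, 'a) cat" and W Cof Fib +
  fixes L R :: "'a \<Rightarrow> 'a" and M :: "'a \<Rightarrow> 'a \<Rightarrow> 'a \<Rightarrow> 'a \<Rightarrow> 'a" and X Y :: 'o
  assumes factorization: "functorial_factorization C L R M"
    and L_Cof: "f \<in> Ar C \<Longrightarrow> L f \<in> Cof" and R_trivial_fibration: "f \<in> Ar C \<Longrightarrow> R f \<in> Fib \<inter> W"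
begin

abbreviation H where "H \<equiv> HomCat C W X Y"

lemma factor_simps [simp]:
  assumes "f \<in> Ar C"
  shows "L f \<in> Ar C" "R f \<in> Ar C" "Dom C (L f) = Dom C f" "Cod C (R f) = Cod C f"
    "Dom C (R f) = Cod C (L f)" "R f \<cdot> L f = f"
  using factorization assms unfolding functorial_factorization_def by auto

lemma M_square:
  assumes "comm_square C f g u v"
  shows "M f g u v \<in> hom C (Cod C (L f)) (Cod C (L g))" "M f g u v \<cdot> L f = L g \<cdot> u"
    "R g \<cdot> M f g u v = v \<cdot> R f"
  using factorization assms unfolding functorial_factorization_def by blast+

lemma M_idt: "f \<in> Ar C \<Longrightarrow> M f f (Idt C (Dom C f)) (Idt C (Cod C f)) = Idt C (Cod C (L f))"
  using factorization unfolding functorial_factorization_def by blast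

lemma M_comp:
  "comm_square C f g u v \<Longrightarrow> comm_square C g h u' v' \<Longrightarrow>
    M f h (u' \<cdot> u) (v' \<cdot> v) = M g h u' v' \<cdot> M f g u v"
  using factorization unfolding functorial_factorization_def by blast

lemma L_W: "f \<in> W \<Longrightarrow> L f \<in> W"
  using W_cancel_post[of "L f" "R f"] R_trivial_fibration W_arr by simp

lemma pb_fst_R_trivial_fibration:
  assumes "zz_obj C W X Y (a, b, c)"
  shows "pb_fst b (R c) \<in> Fib \<inter> W"
  using zz_objD[OF assms] by (intro pb_fst_trivial_fibration R_trivial_fibration) simp_all

definition repl_ob :: "'a zigzag \<Rightarrow> 'a zigzag" where
  "repl_ob = (\<lambda>(a, b, c). (a \<cdot> pb_fst b (R c), pb_snd b (R c), L c))"

definition factor_map :: "'a \<Rightarrow> 'a \<Rightarrow> 'a \<Rightarrow> 'a" where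
  "factor_map c c' v = M c c' (Idt C Y) v"

definition repl_ar :: "'a zigzag_map \<Rightarrow> 'a zigzag_map" where
  "repl_ar = (\<lambda>((a, b, c), (a', b', c'), u, v).
     (repl_ob (a, b, c), repl_ob (a', b', c'),
      pb_lift b' (R c') (u \<cdot> pb_fst b (R c)) (factor_map c c' v \<cdot> pb_snd b (R c)),
      factor_map c c' v))"

definition repl_counit :: "'a zigzag \<Rightarrow> 'a zigzag_map" where
  "repl_counit = (\<lambda>(a, b, c). (repl_ob (a, b, c), (a, b, c), pb_fst b (R c), R c))"

lemma repl_ob_zz_obj:
  assumes z: "zz_obj C W X Y (a, b, c)"
  shows "zz_obj C W X Y (repl_ob (a, b, c))"
  using zz_objD[OF z] pb_fst_R_trivial_fibration[OF z] L_W
  by (simp add: repl_ob_def zz_obj_iff W_comp)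

lemma repl_counit_zz_arr:
  assumes z: "zz_obj C W X Y (a, b, c)"
  shows "zz_arr C W X Y (repl_counit (a, b, c))"
  using zz_objD[OF z] pb_fst_R_trivial_fibration[OF z] repl_ob_zz_obj[OF z] R_trivial_fibration z
  by (simp add: repl_counit_def repl_ob_def zz_arr_iff pb_commutes)

lemma factor_map_square:
  assumes m: "zz_arr C W X Y ((a, b, c), (a', b', c'), u, v)"
  shows "factor_map c c' v \<in> Ar C" "Dom C (factor_map c c' v) = Cod C (L c)"
    "Cod C (factor_map c c' v) = Cod C (L c')" "factor_map c c' v \<cdot> L c = L c'"
    "R c' \<cdot> factor_map c c' v = v \<cdot> R c" "factor_map c c' v \<in> W"
proof -
  note z = zz_objD[OF zz_arrD(1)[OF m]] and z' = zz_objD[OF zz_arrD(2)[OF m]] and uv = zz_arrD[OF m]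
  have "Y \<in> Ob C"
    using dom_ob z by metis
  then have "comm_square C c c' (Idt C Y) v"
    using z z' uv by (simp add: comm_square_def hom_def)
  then show M: "factor_map c c' v \<in> Ar C" "Dom C (factor_map c c' v) = Cod C (L c)"
    "Cod C (factor_map c c' v) = Cod C (L c')" "factor_map c c' v \<cdot> L c = L c'"
    "R c' \<cdot> factor_map c c' v = v \<cdot> R c"
    using M_square z z' by (simp_all add: factor_map_def hom_def)
  show "factor_map c c' v \<in> W"
  proof (rule W_cancel_post[of _ "R c'"])
    show "R c' \<cdot> factor_map c c' v \<in> W"
      using M z uv R_trivial_fibration W_comp[of "R c" v] by simp
  qed (use M z' R_trivial_fibration in simp_all)
qed

lemma factor_map_idt:
  assumes z: "zz_obj C W X Y (a, b, c)"
  shows "factor_map c c (Idt C (Cod C c)) = Idt C (Cod C (L c))"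
  using M_idt[of c] zz_objD[OF z] by (simp add: factor_map_def)

lemma factor_map_comp:
  assumes m: "zz_arr C W X Y ((a, b, c), (a', b', c'), u, v)"
    and m': "zz_arr C W X Y ((a', b', c'), (a'', b'', c''), u', v')"
  shows "factor_map c c'' (v' \<cdot> v) = factor_map c' c'' v' \<cdot> factor_map c c' v"
proof -
  note z = zz_objD[OF zz_arrD(1)[OF m]] and z' = zz_objD[OF zz_arrD(2)[OF m]]
    and z'' = zz_objD[OF zz_arrD(2)[OF m']] and uv = zz_arrD[OF m] and uv' = zz_arrD[OF m']
  have Y: "Y \<in> Ob C"
    using dom_ob z by metis
  have "comm_square C c c' (Idt C Y) v" "comm_square C c' c'' (Idt C Y) v'"
    using z z' z'' uv uv' Y by (simp_all add: comm_square_def hom_def)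
  then have "M c c'' (Idt C Y \<cdot> Idt C Y) (v' \<cdot> v) = M c' c'' (Idt C Y) v' \<cdot> M c c' (Idt C Y) v"
    by (rule M_comp)
  then show ?thesis
    using Y by (simp add: factor_map_def)
qed

lemma repl_lift:
  assumes m: "zz_arr C W X Y ((a, b, c), (a', b', c'), u, v)"
  defines "p \<equiv> pb_fst b (R c)" and "q \<equiv> pb_snd b (R c)"
    and "p' \<equiv> pb_fst b' (R c')" and "q' \<equiv> pb_snd b' (R c')"
    and "u1 \<equiv> pb_lift b' (R c') (u \<cdot> pb_fst b (R c)) (factor_map c c' v \<cdot> pb_snd b (R c))"
  shows "u1 \<in> Ar C" "Dom C u1 = Dom C p" "Cod C u1 = Dom C p'"
    and "p' \<cdot> u1 = u \<cdot> p" "q' \<cdot> u1 = factor_map c c' v \<cdot> q" "u1 \<in> W"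
proof -
  note z = zz_objD[OF zz_arrD(1)[OF m]] and z' = zz_objD[OF zz_arrD(2)[OF m]]
    and uv = zz_arrD[OF m] and v1 = factor_map_square[OF m]
  let ?v1 = "factor_map c c' v"
  have pq: "p \<in> Ar C" "q \<in> Ar C" "Dom C q = Dom C p" "Cod C p = Dom C b"
    "Cod C q = Cod C (L c)" "b \<cdot> p = R c \<cdot> q"
    using z pb_commutes[of b "R c"] by (simp_all add: p_def q_def)
  have "b' \<cdot> (u \<cdot> p) = (v \<cdot> b) \<cdot> p"
    using z z' uv pq by (simp add: comp_assoc)
  also have "\<dots> = (v \<cdot> R c) \<cdot> q"
    using z uv pq by (simp add: comp_assoc[symmetric])
  also have "\<dots> = R c' \<cdot> (?v1 \<cdot> q)"
    using z z' v1 pq by (simp add: comp_assoc)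
  finally have cone: "u \<cdot> p \<in> Ar C" "?v1 \<cdot> q \<in> Ar C" "Dom C (u \<cdot> p) = Dom C (?v1 \<cdot> q)"
    "Cod C (u \<cdot> p) = Dom C b'" "Cod C (?v1 \<cdot> q) = Dom C (R c')"
    "b' \<cdot> (u \<cdot> p) = R c' \<cdot> (?v1 \<cdot> q)"
    using z z' uv v1 pq by simp_all
  note lift = pb_lift_factors[OF _ _ _ cone, unfolded p_def q_def, folded u1_def,
      folded p_def q_def p'_def q'_def]
  show u1: "u1 \<in> Ar C" "Dom C u1 = Dom C p" "Cod C u1 = Dom C p'"
    "p' \<cdot> u1 = u \<cdot> p" "q' \<cdot> u1 = ?v1 \<cdot> q"
    using lift z z' uv pq by simp_all
  have p_W: "p \<in> W" "p' \<in> W"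
    using pb_fst_R_trivial_fibration zz_arrD(1,2)[OF m] by (simp_all add: p_def p'_def)
  show "u1 \<in> W"
  proof (rule W_cancel_post[of _ p'])
    show "p' \<cdot> u1 \<in> W"
      using u1 z pq p_W uv W_comp[of p u] by simp
  qed (use u1 z' p_W W_arr in simp_all)
qed

lemma repl_ar_zz_arr:
  assumes m: "zz_arr C W X Y ((a, b, c), (a', b', c'), u, v)"
  shows "zz_arr C W X Y (repl_ar ((a, b, c), (a', b', c'), u, v))"
proof -
  note z = zz_objD[OF zz_arrD(1)[OF m]] and z' = zz_objD[OF zz_arrD(2)[OF m]]
    and uv = zz_arrD[OF m] and u1 = repl_lift[OF m]
  let ?p = "pb_fst b (R c)" and ?p' = "pb_fst b' (R c')"
  have "(a' \<cdot> ?p') \<cdot> pb_lift b' (R c') (u \<cdot> ?p) (factor_map c c' v \<cdot> pb_snd b (R c)) =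
    a' \<cdot> (u \<cdot> ?p)"
    using u1 z' by (simp add: comp_assoc[symmetric])
  also have "\<dots> = a \<cdot> ?p"
    using z z' uv by (simp add: comp_assoc)
  finally show ?thesis
    using repl_ob_zz_obj zz_arrD(1,2)[OF m] u1 factor_map_square[OF m] z z' uv
    by (simp add: repl_ar_def repl_ob_def zz_arr_iff)
qed

lemma repl_ar_idt:
  assumes z: "zz_obj C W X Y (a, b, c)"
  shows "repl_ar (Idt H (a, b, c)) = Idt H (repl_ob (a, b, c))"
proof -
  note abc = zz_objD[OF z]
  let ?p = "pb_fst b (R c)" and ?q = "pb_snd b (R c)"
  have "pb_lift b (R c) ?p ?q = Idt C (Dom C ?p)"
    using pb_lift_eta[of b "R c" "Idt C (Dom C ?p)"] abc dom_ob[of ?p] by simp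
  then show ?thesis
    using abc factor_map_idt[OF z] dom_ob[of ?p]
    by (simp add: repl_ar_def repl_ob_def)
qed

lemma repl_ar_comp:
  assumes m: "zz_arr C W X Y ((a, b, c), (a', b', c'), u, v)"
    and m': "zz_arr C W X Y ((a', b', c'), (a'', b'', c''), u', v')"
  shows "repl_ar (Cmp H ((a', b', c'), (a'', b'', c''), u', v') ((a, b, c), (a', b', c'), u, v)) =
    Cmp H (repl_ar ((a', b', c'), (a'', b'', c''), u', v'))
      (repl_ar ((a, b, c), (a', b', c'), u, v))"
proof -
  let ?p = "pb_fst b (R c)" and ?q = "pb_snd b (R c)"
    and ?p' = "pb_fst b' (R c')" and ?q' = "pb_snd b' (R c')"
    and ?p'' = "pb_fst b'' (R c'')" and ?q'' = "pb_snd b'' (R c'')"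
  let ?v1 = "factor_map c c' v" and ?v1' = "factor_map c' c'' v'"
  let ?u1 = "pb_lift b' (R c') (u \<cdot> ?p) (?v1 \<cdot> ?q)"
    and ?u1' = "pb_lift b'' (R c'') (u' \<cdot> ?p') (?v1' \<cdot> ?q')"
  note z = zz_objD[OF zz_arrD(1)[OF m]] and z' = zz_objD[OF zz_arrD(1)[OF m']]
    and z'' = zz_objD[OF zz_arrD(2)[OF m']] and uv = zz_arrD[OF m] and uv' = zz_arrD[OF m']
  note u1 = repl_lift[OF m] and u1' = repl_lift[OF m']
  note v1 = factor_map_square[OF m] and v1' = factor_map_square[OF m']
  have "?p'' \<cdot> (?u1' \<cdot> ?u1) = (u' \<cdot> ?p') \<cdot> ?u1"
    using u1 u1' z z' z'' by (simp add: comp_assoc)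
  also have "\<dots> = u' \<cdot> (u \<cdot> ?p)"
    using u1 z' uv' by (simp add: comp_assoc[symmetric])
  also have "\<dots> = (u' \<cdot> u) \<cdot> ?p"
    using z uv uv' by (simp add: comp_assoc)
  finally have p_eq: "?p'' \<cdot> (?u1' \<cdot> ?u1) = (u' \<cdot> u) \<cdot> ?p" .
  have "?q'' \<cdot> (?u1' \<cdot> ?u1) = (?v1' \<cdot> ?q') \<cdot> ?u1"
    using u1 u1' z z' z'' by (simp add: comp_assoc)
  also have "\<dots> = ?v1' \<cdot> (?v1 \<cdot> ?q)"
    using u1 z' v1' by (simp add: comp_assoc[symmetric])
  also have "\<dots> = factor_map c c'' (v' \<cdot> v) \<cdot> ?q"
    using z v1 v1' factor_map_comp[OF m m'] by (simp add: comp_assoc)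
  finally have q_eq: "?q'' \<cdot> (?u1' \<cdot> ?u1) = factor_map c c'' (v' \<cdot> v) \<cdot> ?q" .
  have "pb_lift b'' (R c'') ((u' \<cdot> u) \<cdot> ?p) (factor_map c c'' (v' \<cdot> v) \<cdot> ?q) = ?u1' \<cdot> ?u1"
    using pb_lift_eta[of b'' "R c''" "?u1' \<cdot> ?u1"] p_eq q_eq u1 u1' z z' z'' by simp
  then show ?thesis
    by (simp add: repl_ar_def factor_map_comp[OF m m'])
qed

lemma is_functor_repl: "is_functor H H (repl_ob, repl_ar)"
  unfolding is_functor_def fst_conv snd_conv
proof (intro conjI ballI allI impI)
  fix z
  assume "z \<in> Ob H"
  then obtain a b c where "z = (a, b, c)" "zz_obj C W X Y (a, b, c)"
    by (cases z) auto
  then show "repl_ob z \<in> Ob H" "repl_ar (Idt H z) = Idt H (repl_ob z)"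
    using repl_ob_zz_obj repl_ar_idt by simp_all
next
  fix m
  assume "m \<in> Ar H"
  then obtain a b c a' b' c' u v where "m = ((a, b, c), (a', b', c'), u, v)"
    and "zz_arr C W X Y ((a, b, c), (a', b', c'), u, v)"
    by (cases m) auto
  then show "repl_ar m \<in> hom H (repl_ob (Dom H m)) (repl_ob (Cod H m))"
    using repl_ar_zz_arr by (simp add: hom_def repl_ar_def)
next
  fix m m'
  assume "m \<in> Ar H" "m' \<in> Ar H" "Cod H m = Dom H m'"
  then obtain a b c a' b' c' u v a'' b'' c'' u' v' where
    "m = ((a, b, c), (a', b', c'), u, v)" "zz_arr C W X Y ((a, b, c), (a', b', c'), u, v)"
    "m' = ((a', b', c'), (a'', b'', c''), u', v')"
    "zz_arr C W X Y ((a', b', c'), (a'', b'', c''), u', v')"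
    by (cases m; cases m') auto
  then show "repl_ar (Cmp H m' m) = Cmp H (repl_ar m') (repl_ar m)"
    using repl_ar_comp by simp
qed

lemma nat_trans_repl_counit: "nat_trans H H (repl_ob, repl_ar) id_functor repl_counit"
  unfolding nat_trans_def
proof (intro conjI ballI)
  show "is_functor H H (repl_ob, repl_ar)" "is_functor H H id_functor"
    by (rule is_functor_repl, rule is_functor_id)
next
  fix z
  assume "z \<in> Ob H"
  then obtain a b c where "z = (a, b, c)" "zz_obj C W X Y (a, b, c)"
    by (cases z) auto
  then show "repl_counit z \<in> hom H (fst (repl_ob, repl_ar) z) (fst id_functor z)"
    using repl_counit_zz_arr by (simp add: hom_def repl_counit_def id_functor_def)
next
  fix m
  assume "m \<in> Ar H"
  then obtain a b c a' b' c' u v where "m = ((a, b, c), (a', b', c'), u, v)"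
    and m: "zz_arr C W X Y ((a, b, c), (a', b', c'), u, v)"
    by (cases m) auto
  then show "Cmp H (snd id_functor m) (repl_counit (Dom H m)) =
    Cmp H (repl_counit (Cod H m)) (snd (repl_ob, repl_ar) m)"
    using repl_lift(4)[OF m] factor_map_square(5)[OF m]
    by (simp add: repl_counit_def repl_ar_def id_functor_def)
qed

lemma repl_ob_legs:
  assumes z: "zz_obj C W X Y (a, b, c)"
  shows "snd (snd (repl_ob (a, b, c))) \<in> Cof"
    and "a \<in> Fib \<Longrightarrow> fst (repl_ob (a, b, c)) \<in> Fib"
  using zz_objD[OF z] L_Cof pb_fst_R_trivial_fibration[OF z] Fib_comp
  by (simp_all add: repl_ob_def)

end

lemma (in model_cat) cofibrant_right_leg_replacement:
  obtains F \<epsilon> where "is_functor (HomCat C W X Y) (HomCat C W X Y) F"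
    and "nat_trans (HomCat C W X Y) (HomCat C W X Y) F id_functor \<epsilon>"
    and "\<And>z. z \<in> Ob (HomCat C W X Y) \<Longrightarrow> snd (snd (fst F z)) \<in> Cof"
    and "\<And>z. z \<in> Ob (HomCat C W X Y) \<Longrightarrow> fst z \<in> Fib \<Longrightarrow> fst (fst F z) \<in> Fib"
proof -
  obtain L R M where "functorial_factorization C L R M" "\<forall>f\<in>Ar C. L f \<in> Cof \<and> R f \<in> Fib \<inter> W"
    using model unfolding model_category_def by blast
  then interpret cof_replacement C W Cof Fib L R M X Y
    by unfold_locales simp_all
  show ?thesis
  proof (rule that[OF is_functor_repl nat_trans_repl_counit])
    show "snd (snd (fst (repl_ob, repl_ar) z)) \<in> Cof"
      and "fst z \<in> Fib \<Longrightarrow> fst (fst (repl_ob, repl_ar) z) \<in> Fib"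
      if "z \<in> Ob H" for z
      using that repl_ob_legs by (cases z; simp)+
  qed
qed

lemma (in model_cat) fibrant_left_leg_replacement:
  obtains G \<eta> where "is_functor (HomCat C W X Y) (HomCat C W X Y) G"
    and "nat_trans (HomCat C W X Y) (HomCat C W X Y) id_functor G \<eta>"
    and "\<And>z. z \<in> Ob (HomCat C W X Y) \<Longrightarrow> fst (fst G z) \<in> Fib"
    and "\<And>z. z \<in> Ob (HomCat C W X Y) \<Longrightarrow> snd (snd z) \<in> Cof \<Longrightarrow> snd (snd (fst G z)) \<in> Cof"
proof -
  let ?H = "HomCat C W X Y" and ?H' = "HomCat (op_cat C) W Y X" and ?S = reverse_zz
  interpret op: model_cat "op_cat C" W Fib Cof
    using model_category_op_cat[OF model] by unfold_locales
  obtain F \<epsilon> where "is_functor ?H' ?H' F" and \<epsilon>: "nat_trans ?H' ?H' F id_functor \<epsilon>"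
    and F_Fib: "\<And>z. z \<in> Ob ?H' \<Longrightarrow> snd (snd (fst F z)) \<in> Fib"
    and F_Cof: "\<And>z. z \<in> Ob ?H' \<Longrightarrow> fst z \<in> Cof \<Longrightarrow> fst (fst F z) \<in> Cof"
    using op.cofibrant_right_leg_replacement[of Y X] by blast
  let ?G = "functor_comp ?S (functor_comp F ?S)" and ?\<eta> = "snd ?S \<circ> (\<epsilon> \<circ> fst ?S)"
  have S: "is_functor (op_cat ?H) ?H' ?S"
    by (rule is_functor_reverse_zz)
  have S': "is_functor ?H' (op_cat ?H) ?S"
    using is_functor_reverse_zz[of "op_cat C" W Y X] is_functor_op_cat[of ?H' "op_cat ?H" ?S]
    by simp
  have "nat_trans (op_cat ?H) ?H' (functor_comp F ?S) ?S (\<epsilon> \<circ> fst ?S)"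
    using nat_trans_whisker_right[OF \<epsilon> S] by simp
  moreover have
    "\<forall>m\<in>Ar (op_cat ?H). Dom (op_cat ?H) m \<in> Ob (op_cat ?H) \<and> Cod (op_cat ?H) m \<in> Ob (op_cat ?H)"
    using HomCat_dom_cod[of C W X Y] by (simp only: op_cat_simps) blast
  ultimately have "nat_trans (op_cat ?H) (op_cat ?H) ?G id_functor ?\<eta>"
    using nat_trans_whisker_left[OF _ S'] by (metis reverse_zz_involutive)
  then have nt: "nat_trans ?H ?H id_functor ?G ?\<eta>"
    by simp
  show ?thesis
  proof (rule that[OF _ nt])
    show "is_functor ?H ?H ?G"
      using nt unfolding nat_trans_def by blast
    fix z
    assume "z \<in> Ob ?H"
    then have "fst ?S z \<in> Ob ?H'"
      by (cases z) (simp add: zz_obj_op_cat reverse_zz_def reverse_zz_ob_def)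
    then have "snd (snd (fst F (fst ?S z))) \<in> Fib"
      and "fst (fst ?S z) \<in> Cof \<Longrightarrow> fst (fst F (fst ?S z)) \<in> Cof"
      using F_Fib F_Cof by blast+
    then show "fst (fst ?G z) \<in> Fib" and "snd (snd z) \<in> Cof \<Longrightarrow> snd (snd (fst ?G z)) \<in> Cof"
      by (cases z, cases "fst F (fst ?S z)",
          simp add: functor_comp_def reverse_zz_def reverse_zz_ob_def)+
  qed
qed

theorem proposition2p1:
  fixes C :: "('o, 'a) cat" and W Cof Fib :: "'a set" and X Y :: 'o
  assumes "model_category C W Cof Fib"
    and "X \<in> Ob C" and "Y \<in> Ob C"
  shows "homotopy_equivalence (WCWFCat C W Cof Fib X Y) (HomCat C W X Y) id_functor"
proof -
  interpret model_cat C W Cof Fib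
    using assms(1) by unfold_locales
  let ?H = "HomCat C W X Y"
  obtain F \<epsilon> where F: "is_functor ?H ?H F" and \<epsilon>: "nat_trans ?H ?H F id_functor \<epsilon>"
    and F_Cof: "\<And>z. z \<in> Ob ?H \<Longrightarrow> snd (snd (fst F z)) \<in> Cof"
    and F_Fib: "\<And>z. z \<in> Ob ?H \<Longrightarrow> fst z \<in> Fib \<Longrightarrow> fst (fst F z) \<in> Fib"
    using cofibrant_right_leg_replacement[of X Y] by metis
  obtain G \<eta> where "is_functor ?H ?H G" and \<eta>: "nat_trans ?H ?H id_functor G \<eta>"
    and G_Fib: "\<And>z. z \<in> Ob ?H \<Longrightarrow> fst (fst G z) \<in> Fib"
    and G_Cof: "\<And>z. z \<in> Ob ?H \<Longrightarrow> snd (snd z) \<in> Cof \<Longrightarrow> snd (snd (fst G z)) \<in> Cof"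
    using fibrant_left_leg_replacement[of X Y] by metis
  define P :: "'a zigzag \<Rightarrow> bool" where "P = (\<lambda>(a, b, c). a \<in> Fib \<inter> W \<and> c \<in> Cof \<inter> W)"
  have P_iff: "P z \<longleftrightarrow> fst z \<in> Fib \<and> snd (snd z) \<in> Cof" if "z \<in> Ob ?H" for z
    using that by (cases z) (simp add: P_def zz_obj_iff)
  have F_ob: "fst F z \<in> Ob ?H" and G_ob: "fst G z \<in> Ob ?H" if "z \<in> Ob ?H" for z
    using F \<eta> that unfolding is_functor_def nat_trans_def by blast+
  have "nat_trans ?H ?H F (functor_comp G F) (\<eta> \<circ> fst F)"
    using nat_trans_whisker_right[OF \<eta> F] by simp
  moreover have "WCWFCat C W Cof Fib X Y = full_subcat ?H P"
    by (simp add: WCWFCat_def P_def)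
  moreover have "\<forall>z\<in>Ob ?H. P z \<longrightarrow> P (fst F z)" "\<forall>z\<in>Ob ?H. P (fst (functor_comp G F) z)"
    using P_iff F_ob G_ob F_Cof F_Fib G_Fib G_Cof by (simp_all add: functor_comp_def)
  ultimately show ?thesis
    using homotopy_equivalence_full_subcat_inclusion[OF HomCat_dom_cod \<epsilon>] by simp
qed

end
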